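(* Let $n\ge 5$ and $0\le p\le n-2$. Then every simplicial $p$-cycle $c$ (with integer coefficients) in $\Delta_n$ is homologous in $\Delta_n$ to a $p$-cycle $\tilde c$ all of whose simplices lie in $\partial(\Delta_n)$.
   Context: $\mathbb{I}_n$ is the $n$-dimensional hypercube graph on vertex set $\{0,1\}^n$ (adjacent iff differing in exactly one coordinate), with Hamming distance $d(v,w)=\#\{i: v(i)\ne w(i)\}$, $v(i)$ the $i$-th coordinate. $\Delta_n=\mathcal{VR}(\mathbb{I}_n;3)$ is the simplicial complex whose simplices are the subsets $\sigma\subseteq\{0,1\}^n$ with $d(x,y)\le 3$ for all $x,y\in\sigma$. For $i\in[n]$ and $\epsilon\in\{0,1\}$, $\mathbb{I}_n^{(i,\epsilon)}$ is the induced subgraph on $\{v: v(i)=\epsilon\}$ (isomorphic to $\mathbb{I}_{n-1}$), and $\partial(\Delta_n)=\bigcup_{i\in[n],\,\epsilon\in\{0,1\}}\mathcal{VR}(\mathbb{I}_n^{(i,\epsilon)};3)$, i.e. the subcomplex of simplices that do not cover all places (a simplex covers all places if for every $i$ it contains vertices with $i$-th coordinates $0$ and $1$). *)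

theory Defs
  imports Main
begin

definition cube_vertices :: "nat \<Rightarrow> bool list set" where
  "cube_vertices n = {v. length v = n}"

definition hamming :: "bool list \<Rightarrow> bool list \<Rightarrow> nat" where
  "hamming v w = card {i. i < length v \<and> v ! i \<noteq> w ! i}"

(* Delta_n = VR(I_n; 3): nonempty vertex sets of pairwise Hamming distance <= 3 *)
definition Delta :: "nat \<Rightarrow> bool list set set" where
  "Delta n = {\<sigma>. \<sigma> \<noteq> {} \<and> \<sigma> \<subseteq> cube_vertices n \<and>
                   (\<forall>x\<in>\<sigma>. \<forall>y\<in>\<sigma>. hamming x y \<le> 3)}"

(* boundary subcomplex: union of VR(I_n^(i,e);3) *)
definition partial_Delta :: "nat \<Rightarrow> bool list set set" where
  "partial_Delta n = {\<sigma> \<in> Delta n. \<exists>i<n. \<exists>e. \<forall>v\<in>\<sigma>. v ! i = e}"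

(* fixed total order on vertices (lexicographic, False < True), used to orient simplices *)
definition vless :: "bool list \<Rightarrow> bool list \<Rightarrow> bool" where
  "vless v w = (\<exists>i<length v. (\<forall>j<i. v ! j = w ! j) \<and> \<not> v ! i \<and> w ! i)"

(* simplicial p-chains with integer coefficients in complex K:
   finitely supported functions on p-simplices (sets of p+1 vertices) of K,
   each simplex oriented by the vertex order vless *)
definition is_chain :: "bool list set set \<Rightarrow> nat \<Rightarrow> (bool list set \<Rightarrow> int) \<Rightarrow> bool" where
  "is_chain K p c = (finite {\<sigma>. c \<sigma> \<noteq> 0} \<and>
      (\<forall>\<sigma>. c \<sigma> \<noteq> 0 \<longrightarrow> \<sigma> \<in> K \<and> card \<sigma> = p + 1))"

(* simplicial boundary: d[v_0<...<v_q] = sum_i (-1)^i [v_0,..,^v_i,..,v_q]; zero on 0-chains *)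
definition bd :: "(bool list set \<Rightarrow> int) \<Rightarrow> bool list set \<Rightarrow> int" where
  "bd c \<tau> = (if \<tau> = {} then 0 else
     (\<Sum>\<sigma>\<in>{\<sigma>. c \<sigma> \<noteq> 0}.
        if \<tau> \<subseteq> \<sigma> \<and> finite \<sigma> \<and> card \<sigma> = card \<tau> + 1
        then (-1) ^ card {w\<in>\<sigma>. vless w (the_elem (\<sigma> - \<tau>))} * c \<sigma>
        else 0))"

definition is_cycle :: "bool list set set \<Rightarrow> nat \<Rightarrow> (bool list set \<Rightarrow> int) \<Rightarrow> bool" where
  "is_cycle K p c = (is_chain K p c \<and> bd c = (\<lambda>_. 0))"

definition homologous :: "bool list set set \<Rightarrow> nat \<Rightarrow> (bool list set \<Rightarrow> int) \<Rightarrow> (bool list set \<Rightarrow> int) \<Rightarrow> bool" where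
  "homologous K p c c' = (\<exists>d. is_chain K (p + 1) d \<and> (\<forall>\<tau>. c \<tau> - c' \<tau> = bd d \<tau>))"

end

theory Submission
  imports Defs
begin

text \<open>A simplex \<open>\<sigma>\<close> of a cycle that covers all places is coned off by a new vertex \<open>w\<close> such
  that every facet of \<open>\<sigma> \<union> {w}\<close> other than \<open>\<sigma>\<close> lies in a coordinate hyperplane; subtracting the
  boundary of the signed sum of these cones removes all covering simplices and creates none.

  To find \<open>w\<close>, record each vertex of \<open>\<sigma>\<close> as the set of coordinates where it differs from a
  fixed vertex \<open>x\<close>. Since \<open>\<sigma>\<close> has at most \<open>n - 1\<close> vertices, covering all \<open>n\<close> coordinates
  with pairwise distances at most 3 forces a rigid shape: a largest set \<open>A\<close> has three elements,
  every other nonempty set is a private coordinate together with a nonempty proper part of \<open>A\<close>,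
  and these parts form a chain. So some \<open>a \<in> A\<close> lies in all nonempty sets and some \<open>c \<in> A\<close> in
  none of the others, and \<open>w\<close> is \<open>x\<close> with coordinate \<open>a\<close> flipped: the facet opposite \<open>x\<close> is
  constant in coordinate \<open>a\<close>, the one opposite the vertex recorded as \<open>A\<close> in \<open>c\<close>, and any other one in the private
  coordinate of the removed vertex.\<close>

section \<open>Oriented simplicial chains\<close>

lemma vless_irrefl: "\<not> vless v v"
  unfolding vless_def by auto

lemma vless_asym:
  assumes "vless u v"
  shows "\<not> vless v u"
proof
  assume "vless v u"
  obtain i where i: "i < length u" "\<forall>j<i. u ! j = v ! j" "\<not> u ! i" "v ! i"
    using assms unfolding vless_def by blast
  obtain k where k: "k < length v" "\<forall>j<k. v ! j = u ! j" "\<not> v ! k" "u ! k"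
    using \<open>vless v u\<close> unfolding vless_def by blast
  show False using i k by (cases i k rule: linorder_cases) auto
qed

lemma vless_linear:
  assumes "length u = length v" "u \<noteq> v"
  shows "vless u v \<or> vless v u"
proof -
  let ?D = "\<lambda>i. i < length u \<and> u ! i \<noteq> v ! i"
  have "\<exists>i. ?D i" using assms nth_equalityI by blast
  then have least: "?D (Least ?D)" by (rule LeastI_ex)
  have "\<forall>j<Least ?D. u ! j = v ! j"
    using least not_less_Least by fastforce
  then show ?thesis using least assms(1) unfolding vless_def by (metis (no_types, lifting))
qed

definition face_sign :: "bool list set \<Rightarrow> bool list set \<Rightarrow> int" where
  "face_sign \<sigma> \<tau> = (-1) ^ card {w\<in>\<sigma>. vless w (the_elem (\<sigma> - \<tau>))}"

definition incidence :: "bool list set \<Rightarrow> bool list set \<Rightarrow> int" where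
  "incidence \<tau> \<sigma> = (if \<tau> \<subseteq> \<sigma> \<and> finite \<sigma> \<and> card \<sigma> = card \<tau> + 1 then face_sign \<sigma> \<tau> else 0)"

lemma bd_eq_sum_incidence:
  assumes "finite F" "{\<sigma>. c \<sigma> \<noteq> 0} \<subseteq> F" "\<tau> \<noteq> {}"
  shows "bd c \<tau> = (\<Sum>\<sigma>\<in>F. incidence \<tau> \<sigma> * c \<sigma>)"
  unfolding bd_def using assms
  by (simp, intro sum.mono_neutral_cong_left) (auto simp: incidence_def face_sign_def)

lemma face_sign_square: "face_sign \<sigma> \<tau> * face_sign \<sigma> \<tau> = 1"
  unfolding face_sign_def by (simp flip: power_mult_distrib)

lemma card_Suc_subsetE:
  assumes "finite \<sigma>" "\<tau> \<subseteq> \<sigma>" "card \<sigma> = card \<tau> + 1"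
  obtains x where "x \<in> \<sigma>" "\<tau> = \<sigma> - {x}"
proof -
  have "finite \<tau>" using assms(1,2) finite_subset by blast
  then have "card (\<sigma> - \<tau>) = 1" using assms(2,3) by (simp add: card_Diff_subset)
  then obtain x where "\<sigma> - \<tau> = {x}" by (auto simp: card_Suc_eq)
  then show thesis using that assms(2) by blast
qed

text \<open>Deleting \<open>b\<close> leaves the vertices below \<open>a\<close> unchanged, while deleting \<open>a\<close> removes one
  vertex below \<open>b\<close>; so the two signs of the codimension-two face differ.\<close>

lemma face_signs_cancel_ordered:
  assumes ab: "vless a b" and "a \<in> \<sigma>" "b \<in> \<sigma>" "finite \<sigma>"
  shows "face_sign (\<sigma> - {b}) (\<sigma> - {a, b}) * face_sign \<sigma> (\<sigma> - {b})
       + face_sign (\<sigma> - {a}) (\<sigma> - {a, b}) * face_sign \<sigma> (\<sigma> - {a}) = 0"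
proof -
  have "a \<noteq> b" using ab vless_irrefl by blast
  then have diffs: "(\<sigma> - {b}) - (\<sigma> - {a, b}) = {a}" "\<sigma> - (\<sigma> - {b}) = {b}"
      "(\<sigma> - {a}) - (\<sigma> - {a, b}) = {b}" "\<sigma> - (\<sigma> - {a}) = {a}"
    using assms(2,3) by auto
  have below_a: "{w\<in>\<sigma> - {b}. vless w a} = {w\<in>\<sigma>. vless w a}"
    using vless_asym[OF ab] by auto
  let ?B = "{w\<in>\<sigma>. vless w b}"
  have aB: "a \<in> ?B" using assms(1,2) by simp
  have "finite ?B" using assms(4) by simp
  then have "card ?B > 0" using aB card_gt_0_iff by blast
  then obtain k where k: "card ?B = Suc k" using gr0_implies_Suc by blast
  have "{w\<in>\<sigma> - {a}. vless w b} = ?B - {a}" by blast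
  then have "card {w\<in>\<sigma> - {a}. vless w b} = k" using k aB \<open>finite ?B\<close> by simp
  then show ?thesis unfolding face_sign_def diffs the_elem_eq below_a k by simp
qed

lemma face_signs_cancel:
  assumes "a \<noteq> b" "length a = length b" "a \<in> \<sigma>" "b \<in> \<sigma>" "finite \<sigma>"
  shows "face_sign (\<sigma> - {b}) (\<sigma> - {a, b}) * face_sign \<sigma> (\<sigma> - {b})
       + face_sign (\<sigma> - {a}) (\<sigma> - {a, b}) * face_sign \<sigma> (\<sigma> - {a}) = 0"
proof -
  consider "vless a b" | "vless b a" using vless_linear assms(1,2) by blast
  then show ?thesis
  proof cases
    case 1
    then show ?thesis using face_signs_cancel_ordered assms(3-5) by blast
  next
    case 2
    then show ?thesis using face_signs_cancel_ordered[OF 2 assms(4,3,5)] by (simp add: insert_commute)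
  qed
qed

lemma incidence_nonzeroD:
  assumes "incidence \<tau> \<sigma> \<noteq> 0"
  shows "\<tau> \<subseteq> \<sigma>" "finite \<sigma>" "card \<sigma> = card \<tau> + 1"
  using assms unfolding incidence_def by (auto split: if_splits)

lemma sum_incidence_incidence_eq_0:
  assumes fin: "finite \<sigma>" and cube: "\<sigma> \<subseteq> cube_vertices n"
  shows "(\<Sum>\<rho>\<in>Pow \<sigma>. incidence \<tau> \<rho> * incidence \<rho> \<sigma>) = 0"
proof (cases "\<tau> \<subseteq> \<sigma> \<and> card \<sigma> = card \<tau> + 2")
  case False
  have "incidence \<tau> \<rho> * incidence \<rho> \<sigma> = 0" for \<rho>
    using False incidence_nonzeroD[of \<tau> \<rho>] incidence_nonzeroD[of \<rho> \<sigma>] by fastforce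
  then show ?thesis by (simp add: sum.neutral)
next
  case True
  have "finite \<tau>" using True fin finite_subset by blast
  then have "card (\<sigma> - \<tau>) = 2" using True by (simp add: card_Diff_subset)
  then obtain a b where ab: "\<sigma> - \<tau> = {a, b}" "a \<noteq> b" by (auto simp: card_Suc_eq numeral_2_eq_2)
  have \<tau>: "\<tau> = \<sigma> - {a, b}" and abS: "a \<in> \<sigma>" "b \<in> \<sigma>" using ab True by auto
  have facets: "\<rho> \<in> {\<sigma> - {b}, \<sigma> - {a}}" if "incidence \<tau> \<rho> * incidence \<rho> \<sigma> \<noteq> 0" for \<rho>
  proof -
    have sub: "\<tau> \<subseteq> \<rho>" using that incidence_nonzeroD(1) by force
    have "incidence \<rho> \<sigma> \<noteq> 0" using that by auto
    note \<rho> = incidence_nonzeroD[OF this]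
    obtain x where x: "x \<in> \<sigma>" "\<rho> = \<sigma> - {x}" by (rule card_Suc_subsetE[OF \<rho>(2,1,3)])
    then have "x \<in> \<sigma> - \<tau>" using sub by blast
    then show ?thesis using x(2) ab(1) by auto
  qed
  have "(\<Sum>\<rho>\<in>Pow \<sigma>. incidence \<tau> \<rho> * incidence \<rho> \<sigma>)
      = (\<Sum>\<rho>\<in>{\<sigma> - {b}, \<sigma> - {a}}. incidence \<tau> \<rho> * incidence \<rho> \<sigma>)"
    using facets fin by (intro sum.mono_neutral_right) auto
  also have "\<dots> = face_sign (\<sigma> - {b}) \<tau> * face_sign \<sigma> (\<sigma> - {b})
                 + face_sign (\<sigma> - {a}) \<tau> * face_sign \<sigma> (\<sigma> - {a})"
  proof -
    have "\<sigma> - {b} \<noteq> \<sigma> - {a}" using abS ab(2) by blast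
    moreover have "card (\<sigma> - {b}) = card \<tau> + 1" "card (\<sigma> - {a}) = card \<tau> + 1"
      "card \<sigma> = card (\<sigma> - {b}) + 1" "card \<sigma> = card (\<sigma> - {a}) + 1"
      using True abS fin by auto
    ultimately show ?thesis unfolding incidence_def using \<tau> fin by auto
  qed
  also have "\<dots> = 0"
    using face_signs_cancel[OF ab(2) _ abS fin] abS cube \<tau> unfolding cube_vertices_def by auto
  finally show ?thesis .
qed

lemma bd_nonzero_imp_coface:
  assumes "bd d \<tau> \<noteq> 0"
  shows "\<tau> \<noteq> {}" and "\<exists>\<rho>. d \<rho> \<noteq> 0 \<and> \<tau> \<subseteq> \<rho> \<and> finite \<rho> \<and> card \<rho> = card \<tau> + 1"
proof -
  show ne: "\<tau> \<noteq> {}" using assms unfolding bd_def by auto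
  have "finite {\<rho>. d \<rho> \<noteq> 0}"
  proof (rule ccontr)
    assume "infinite {\<rho>. d \<rho> \<noteq> 0}"
    then show False using assms unfolding bd_def by (metis (no_types, lifting) sum.infinite)
  qed
  then have "bd d \<tau> = (\<Sum>\<rho>\<in>{\<rho>. d \<rho> \<noteq> 0}. incidence \<tau> \<rho> * d \<rho>)"
    using ne by (intro bd_eq_sum_incidence) auto
  then obtain \<rho> where "d \<rho> \<noteq> 0" "incidence \<tau> \<rho> * d \<rho> \<noteq> 0"
    using assms by (auto elim: sum.not_neutral_contains_not_neutral)
  then show "\<exists>\<rho>. d \<rho> \<noteq> 0 \<and> \<tau> \<subseteq> \<rho> \<and> finite \<rho> \<and> card \<rho> = card \<tau> + 1"
    unfolding incidence_def by (auto split: if_splits)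
qed

lemma bd_bd_eq_sum:
  assumes fin: "finite {\<sigma>. d \<sigma> \<noteq> 0}" and fin_simplices: "\<And>\<sigma>. d \<sigma> \<noteq> 0 \<Longrightarrow> finite \<sigma>"
    and ne: "\<tau> \<noteq> {}"
  shows "bd (bd d) \<tau> = (\<Sum>\<sigma>\<in>{\<sigma>. d \<sigma> \<noteq> 0}. d \<sigma> * (\<Sum>\<rho>\<in>Pow \<sigma>. incidence \<tau> \<rho> * incidence \<rho> \<sigma>))"
proof -
  define H where "H = {\<sigma>. d \<sigma> \<noteq> 0}"
  define G where "G = (\<Union>\<sigma>\<in>H. Pow \<sigma>)"
  have fH: "finite H" using fin unfolding H_def .
  have fG: "finite G" unfolding G_def using fH fin_simplices H_def by auto
  have "{\<rho>. bd d \<rho> \<noteq> 0} \<subseteq> G"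
    using bd_nonzero_imp_coface(2)[of d] unfolding G_def H_def by blast
  then have "bd (bd d) \<tau> = (\<Sum>\<rho>\<in>G. incidence \<tau> \<rho> * bd d \<rho>)"
    by (rule bd_eq_sum_incidence[OF fG _ ne])
  also have "\<dots> = (\<Sum>\<rho>\<in>G. \<Sum>\<sigma>\<in>H. incidence \<tau> \<rho> * (incidence \<rho> \<sigma> * d \<sigma>))"
  proof (rule sum.cong[OF refl])
    fix \<rho>
    show "incidence \<tau> \<rho> * bd d \<rho> = (\<Sum>\<sigma>\<in>H. incidence \<tau> \<rho> * (incidence \<rho> \<sigma> * d \<sigma>))"
    proof (cases "\<rho> = {}")
      case True
      then show ?thesis using ne unfolding incidence_def by simp
    next
      case False
      then show ?thesis using bd_eq_sum_incidence[OF fH _ False, of d] unfolding H_def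
        by (simp add: sum_distrib_left)
    qed
  qed
  also have "\<dots> = (\<Sum>\<sigma>\<in>H. \<Sum>\<rho>\<in>G. incidence \<tau> \<rho> * (incidence \<rho> \<sigma> * d \<sigma>))"
    by (rule sum.swap)
  also have "\<dots> = (\<Sum>\<sigma>\<in>H. d \<sigma> * (\<Sum>\<rho>\<in>Pow \<sigma>. incidence \<tau> \<rho> * incidence \<rho> \<sigma>))"
  proof (rule sum.cong[OF refl])
    fix \<sigma> assume "\<sigma> \<in> H"
    then have "(\<Sum>\<rho>\<in>G. incidence \<tau> \<rho> * (incidence \<rho> \<sigma> * d \<sigma>))
        = (\<Sum>\<rho>\<in>Pow \<sigma>. incidence \<tau> \<rho> * (incidence \<rho> \<sigma> * d \<sigma>))"
      using fG unfolding G_def by (intro sum.mono_neutral_right) (auto simp: incidence_def)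
    then show "(\<Sum>\<rho>\<in>G. incidence \<tau> \<rho> * (incidence \<rho> \<sigma> * d \<sigma>))
        = d \<sigma> * (\<Sum>\<rho>\<in>Pow \<sigma>. incidence \<tau> \<rho> * incidence \<rho> \<sigma>)"
      by (simp add: sum_distrib_left algebra_simps)
  qed
  finally show ?thesis unfolding H_def .
qed

lemma bd_bd_eq_0:
  assumes fin: "finite {\<sigma>. d \<sigma> \<noteq> 0}"
    and cube: "\<And>\<sigma>. d \<sigma> \<noteq> 0 \<Longrightarrow> finite \<sigma> \<and> \<sigma> \<subseteq> cube_vertices n"
  shows "bd (bd d) \<tau> = 0"
proof (cases "\<tau> = {}")
  case True
  then show ?thesis unfolding bd_def by simp
next
  case False
  have "(\<Sum>\<rho>\<in>Pow \<sigma>. incidence \<tau> \<rho> * incidence \<rho> \<sigma>) = 0" if "d \<sigma> \<noteq> 0" for \<sigma>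
    using cube[OF that] sum_incidence_incidence_eq_0 by blast
  then show ?thesis using bd_bd_eq_sum[OF fin _ False] cube by simp
qed

lemma bd_diff:
  assumes "finite {\<sigma>. a \<sigma> \<noteq> 0}" "finite {\<sigma>. b \<sigma> \<noteq> 0}"
  shows "bd (\<lambda>\<sigma>. a \<sigma> - b \<sigma>) \<tau> = bd a \<tau> - bd b \<tau>"
proof (cases "\<tau> = {}")
  case True
  then show ?thesis unfolding bd_def by simp
next
  case False
  let ?F = "{\<sigma>. a \<sigma> \<noteq> 0} \<union> {\<sigma>. b \<sigma> \<noteq> 0}"
  have F: "finite ?F" using assms by simp
  have "{\<sigma>. a \<sigma> - b \<sigma> \<noteq> 0} \<subseteq> ?F" "{\<sigma>. a \<sigma> \<noteq> 0} \<subseteq> ?F" "{\<sigma>. b \<sigma> \<noteq> 0} \<subseteq> ?F"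
    by auto
  from this[THEN bd_eq_sum_incidence[OF F _ False]] show ?thesis
    by (simp add: right_diff_distrib sum_subtractf)
qed

lemma finite_cube_vertices: "finite (cube_vertices n)"
proof -
  have "cube_vertices n = {xs. set xs \<subseteq> UNIV \<and> length xs = n}"
    unfolding cube_vertices_def by auto
  then show ?thesis using finite_lists_length_eq[of "UNIV :: bool set" n] by simp
qed

lemma Delta_finite: "\<sigma> \<in> Delta n \<Longrightarrow> finite \<sigma>"
  unfolding Delta_def using finite_cube_vertices finite_subset by blast

lemma Delta_vertex_length: "\<sigma> \<in> Delta n \<Longrightarrow> v \<in> \<sigma> \<Longrightarrow> length v = n"
  unfolding Delta_def cube_vertices_def by auto

lemma Delta_face: "\<rho> \<in> Delta n \<Longrightarrow> \<tau> \<subseteq> \<rho> \<Longrightarrow> \<tau> \<noteq> {} \<Longrightarrow> \<tau> \<in> Delta n"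
  unfolding Delta_def by blast

lemma is_chain_bd:
  assumes "is_chain (Delta n) (p + 1) d"
  shows "is_chain (Delta n) p (bd d)"
proof -
  have d: "finite {\<rho>. d \<rho> \<noteq> 0}" "\<And>\<rho>. d \<rho> \<noteq> 0 \<Longrightarrow> \<rho> \<in> Delta n \<and> card \<rho> = p + 2"
    using assms unfolding is_chain_def by auto
  have face: "\<tau> \<in> Delta n \<and> card \<tau> = p + 1 \<and> (\<exists>\<rho>. d \<rho> \<noteq> 0 \<and> \<tau> \<subseteq> \<rho>)" if nz: "bd d \<tau> \<noteq> 0" for \<tau>
  proof -
    obtain \<rho> where \<rho>: "d \<rho> \<noteq> 0" "\<tau> \<subseteq> \<rho>" "card \<rho> = card \<tau> + 1"
      using bd_nonzero_imp_coface(2)[OF nz] by blast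
    then show ?thesis using d(2)[OF \<rho>(1)] Delta_face bd_nonzero_imp_coface(1)[OF nz] by auto
  qed
  have "{\<tau>. bd d \<tau> \<noteq> 0} \<subseteq> (\<Union>\<rho>\<in>{\<rho>. d \<rho> \<noteq> 0}. Pow \<rho>)" using face by blast
  moreover have "finite (\<Union>\<rho>\<in>{\<rho>. d \<rho> \<noteq> 0}. Pow \<rho>)" using d Delta_finite by auto
  ultimately show ?thesis unfolding is_chain_def using face finite_subset by blast
qed

lemma cycle_minus_bd:
  assumes c: "is_cycle (Delta n) p c" and d: "is_chain (Delta n) (p + 1) d"
  shows "is_cycle (Delta n) p (\<lambda>\<tau>. c \<tau> - bd d \<tau>)"
    and "homologous (Delta n) p c (\<lambda>\<tau>. c \<tau> - bd d \<tau>)"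
proof -
  have bdd: "is_chain (Delta n) p (bd d)" using is_chain_bd[OF d] .
  have fin: "finite {\<tau>. c \<tau> \<noteq> 0}" "finite {\<tau>. bd d \<tau> \<noteq> 0}"
    using c bdd unfolding is_cycle_def is_chain_def by auto
  have "is_chain (Delta n) p (\<lambda>\<tau>. c \<tau> - bd d \<tau>)"
  proof -
    have "{\<tau>. c \<tau> - bd d \<tau> \<noteq> 0} \<subseteq> {\<tau>. c \<tau> \<noteq> 0} \<union> {\<tau>. bd d \<tau> \<noteq> 0}" by auto
    then have "finite {\<tau>. c \<tau> - bd d \<tau> \<noteq> 0}" using fin finite_subset by blast
    moreover have "\<tau> \<in> Delta n \<and> card \<tau> = p + 1" if "c \<tau> - bd d \<tau> \<noteq> 0" for \<tau>
      using that c bdd unfolding is_cycle_def is_chain_def by (cases "c \<tau> = 0") auto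
    ultimately show ?thesis unfolding is_chain_def by blast
  qed
  moreover have "bd (\<lambda>\<tau>. c \<tau> - bd d \<tau>) \<tau> = 0" for \<tau>
  proof -
    have "bd (\<lambda>\<tau>. c \<tau> - bd d \<tau>) \<tau> = bd c \<tau> - bd (bd d) \<tau>" using bd_diff[OF fin] .
    moreover have "bd (bd d) \<tau> = 0"
      using d Delta_finite unfolding is_chain_def Delta_def by (intro bd_bd_eq_0) auto
    ultimately show ?thesis using c unfolding is_cycle_def by simp
  qed
  ultimately show "is_cycle (Delta n) p (\<lambda>\<tau>. c \<tau> - bd d \<tau>)" unfolding is_cycle_def by blast
  show "homologous (Delta n) p c (\<lambda>\<tau>. c \<tau> - bd d \<tau>)"
    using d unfolding homologous_def by auto
qed

section \<open>Coning off simplices\<close>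

locale coning =
  fixes n p :: nat and c :: "bool list set \<Rightarrow> int"
    and Q :: "bool list set \<Rightarrow> bool" and W :: "bool list set \<Rightarrow> bool list"
  assumes chain: "is_chain (Delta n) p c"
    and cone_vertex: "\<And>\<sigma>. c \<sigma> \<noteq> 0 \<Longrightarrow> Q \<sigma> \<Longrightarrow>
      W \<sigma> \<notin> \<sigma> \<and> insert (W \<sigma>) \<sigma> \<in> Delta n \<and> (\<forall>y\<in>\<sigma>. \<not> Q (insert (W \<sigma>) \<sigma> - {y}))"
begin

definition coned :: "bool list set set" where
  "coned = {\<sigma>. c \<sigma> \<noteq> 0 \<and> Q \<sigma>}"

abbreviation cone :: "bool list set \<Rightarrow> bool list set" where
  "cone \<sigma> \<equiv> insert (W \<sigma>) \<sigma>"

text \<open>The sign makes the coefficient of \<open>\<sigma>\<close> in the boundary of \<open>cone_chain\<close> equal to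
  \<open>c \<sigma>\<close>, because \<open>face_sign\<close> squares to \<open>1\<close>.\<close>

definition cone_chain :: "bool list set \<Rightarrow> int" where
  "cone_chain \<rho> = (\<Sum>\<sigma>\<in>{\<sigma>\<in>coned. cone \<sigma> = \<rho>}. face_sign (cone \<sigma>) \<sigma> * c \<sigma>)"

lemma coned_simplex:
  assumes "\<sigma> \<in> coned"
  shows "finite \<sigma>" "card \<sigma> = p + 1" "cone \<sigma> \<in> Delta n" "card (cone \<sigma>) = p + 2" "W \<sigma> \<notin> \<sigma>"
    and "\<forall>y\<in>\<sigma>. \<not> Q (cone \<sigma> - {y})"
proof -
  have "c \<sigma> \<noteq> 0" "Q \<sigma>" using assms unfolding coned_def by auto
  then show "cone \<sigma> \<in> Delta n" "W \<sigma> \<notin> \<sigma>" "\<forall>y\<in>\<sigma>. \<not> Q (cone \<sigma> - {y})"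
    using cone_vertex by auto
  show fin: "finite \<sigma>" and card: "card \<sigma> = p + 1"
    using chain \<open>c \<sigma> \<noteq> 0\<close> Delta_finite unfolding is_chain_def by auto
  show "card (cone \<sigma>) = p + 2" using fin card \<open>W \<sigma> \<notin> \<sigma>\<close> by simp
qed

lemma facet_of_cone:
  assumes \<sigma>: "\<sigma> \<in> coned" and "Q \<tau>" "\<tau> \<subseteq> cone \<sigma>" "card (cone \<sigma>) = card \<tau> + 1"
  shows "\<tau> = \<sigma>"
proof -
  note \<sigma>' = coned_simplex[OF \<sigma>]
  have "finite (cone \<sigma>)" using \<sigma>'(1) by simp
  then obtain y where y: "y \<in> cone \<sigma>" "\<tau> = cone \<sigma> - {y}"
    using assms(3,4) by (rule card_Suc_subsetE)
  show ?thesis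
  proof (cases "y = W \<sigma>")
    case True
    then show ?thesis using y(2) \<sigma>'(5) by auto
  next
    case False
    then have "y \<in> \<sigma>" using y(1) by blast
    then show ?thesis using \<sigma>'(6) y(2) \<open>Q \<tau>\<close> by blast
  qed
qed

lemma cone_chain_cone:
  assumes "\<sigma> \<in> coned"
  shows "cone_chain (cone \<sigma>) = face_sign (cone \<sigma>) \<sigma> * c \<sigma>"
proof -
  have "{\<sigma>'\<in>coned. cone \<sigma>' = cone \<sigma>} = {\<sigma>}"
  proof (intro equalityI subsetI)
    fix \<sigma>' assume "\<sigma>' \<in> {\<sigma>'\<in>coned. cone \<sigma>' = cone \<sigma>}"
    then have \<sigma>': "\<sigma>' \<in> coned" "cone \<sigma>' = cone \<sigma>" by auto
    have "\<sigma> = \<sigma>'"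
    proof (rule facet_of_cone[OF \<sigma>'(1)])
      show "Q \<sigma>" using assms unfolding coned_def by simp
      show "\<sigma> \<subseteq> cone \<sigma>'" using \<sigma>'(2) by auto
      show "card (cone \<sigma>') = card \<sigma> + 1"
        using coned_simplex(2,4) assms \<sigma>'(1) by simp
    qed
    then show "\<sigma>' \<in> {\<sigma>}" by simp
  qed (use assms in simp)
  then show ?thesis unfolding cone_chain_def by simp
qed

lemma cone_chain_nonzero:
  assumes "cone_chain \<rho> \<noteq> 0"
  obtains \<sigma> where "\<sigma> \<in> coned" "\<rho> = cone \<sigma>"
proof -
  have "{\<sigma>\<in>coned. cone \<sigma> = \<rho>} \<noteq> {}"
  proof
    assume "{\<sigma>\<in>coned. cone \<sigma> = \<rho>} = {}"
    then have "cone_chain \<rho> = 0" unfolding cone_chain_def by (simp only: sum.empty)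
    then show False using assms by simp
  qed
  then show thesis using that by blast
qed

lemma is_chain_cone_chain: "is_chain (Delta n) (p + 1) cone_chain"
proof -
  have "finite coned" using chain unfolding is_chain_def coned_def by (simp add: finite_subset)
  moreover have "{\<rho>. cone_chain \<rho> \<noteq> 0} \<subseteq> cone ` coned"
    using cone_chain_nonzero by blast
  ultimately have "finite {\<rho>. cone_chain \<rho> \<noteq> 0}" using finite_subset by blast
  moreover have "\<rho> \<in> Delta n \<and> card \<rho> = p + 2" if "cone_chain \<rho> \<noteq> 0" for \<rho>
    using that coned_simplex(3,4) by (elim cone_chain_nonzero) auto
  ultimately show ?thesis unfolding is_chain_def by simp
qed

lemma bd_cone_chain:
  assumes "Q \<tau>"
  shows "bd cone_chain \<tau> = c \<tau>"
proof (cases "\<tau> = {}")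
  case True
  have "c {} = 0" using chain unfolding is_chain_def Delta_def by auto
  then show ?thesis using True unfolding bd_def by simp
next
  case ne: False
  let ?F = "insert (cone \<tau>) {\<rho>. cone_chain \<rho> \<noteq> 0}"
  have only: "\<rho> = cone \<tau> \<and> \<tau> \<in> coned"
    if nz: "cone_chain \<rho> \<noteq> 0" and inc: "incidence \<tau> \<rho> \<noteq> 0" for \<rho>
  proof -
    obtain \<sigma> where \<sigma>: "\<sigma> \<in> coned" "\<rho> = cone \<sigma>" using nz by (rule cone_chain_nonzero)
    have "\<tau> \<subseteq> \<rho>" "card \<rho> = card \<tau> + 1"
      using inc unfolding incidence_def by (auto split: if_splits)
    then have "\<tau> = \<sigma>" using facet_of_cone[OF \<sigma>(1) assms] \<sigma>(2) by blast
    then show ?thesis using \<sigma> by simp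
  qed
  have "finite ?F" using is_chain_cone_chain unfolding is_chain_def by simp
  then have bd: "bd cone_chain \<tau> = (\<Sum>\<rho>\<in>?F. incidence \<tau> \<rho> * cone_chain \<rho>)"
    using ne by (intro bd_eq_sum_incidence) auto
  show ?thesis
  proof (cases "\<tau> \<in> coned")
    case True
    have "bd cone_chain \<tau> = (\<Sum>\<rho>\<in>{cone \<tau>}. incidence \<tau> \<rho> * cone_chain \<rho>)"
      unfolding bd using only \<open>finite ?F\<close> by (intro sum.mono_neutral_right) auto
    also have "\<dots> = incidence \<tau> (cone \<tau>) * cone_chain (cone \<tau>)" by simp
    also have "incidence \<tau> (cone \<tau>) = face_sign (cone \<tau>) \<tau>"
      using coned_simplex[OF True] unfolding incidence_def by auto
    finally show ?thesis using cone_chain_cone[OF True] face_sign_square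
      by (metis mult.assoc mult_1)
  next
    case False
    then have "c \<tau> = 0" using assms unfolding coned_def by simp
    moreover have "bd cone_chain \<tau> = 0"
      unfolding bd using only False by (intro sum.neutral) auto
    ultimately show ?thesis by simp
  qed
qed

end

lemma cycle_homologous_to_cycle_avoiding:
  assumes c: "is_cycle (Delta n) p c"
    and cone: "\<And>\<sigma>. c \<sigma> \<noteq> 0 \<Longrightarrow> Q \<sigma> \<Longrightarrow>
      \<exists>w. w \<notin> \<sigma> \<and> insert w \<sigma> \<in> Delta n \<and> (\<forall>y\<in>\<sigma>. \<not> Q (insert w \<sigma> - {y}))"
  shows "\<exists>c'. is_cycle (Delta n) p c' \<and> (\<forall>\<sigma>. c' \<sigma> \<noteq> 0 \<longrightarrow> \<not> Q \<sigma>) \<and> homologous (Delta n) p c c'"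
proof -
  obtain W where "\<And>\<sigma>. c \<sigma> \<noteq> 0 \<Longrightarrow> Q \<sigma> \<Longrightarrow>
      W \<sigma> \<notin> \<sigma> \<and> insert (W \<sigma>) \<sigma> \<in> Delta n \<and> (\<forall>y\<in>\<sigma>. \<not> Q (insert (W \<sigma>) \<sigma> - {y}))"
    using cone by metis
  then interpret coning n p c Q W
    using c unfolding is_cycle_def by unfold_locales auto
  let ?c' = "\<lambda>\<tau>. c \<tau> - bd cone_chain \<tau>"
  have "is_cycle (Delta n) p ?c'" "homologous (Delta n) p c ?c'"
    using cycle_minus_bd[OF c is_chain_cone_chain] by auto
  moreover have "\<not> Q \<sigma>" if "?c' \<sigma> \<noteq> 0" for \<sigma> using that bd_cone_chain by auto
  ultimately show ?thesis by blast
qed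

section \<open>Families of coordinate sets\<close>

lemma card_Diff_le_half_sym_diff:
  assumes "finite A" "finite B" "card B \<le> card A"
  shows "2 * card (B - A) \<le> card (sym_diff A B)"
proof -
  have "card (sym_diff A B) = card (A - B) + card (B - A)"
    using assms by (intro card_Un_disjoint) auto
  moreover have "card (A - B) = card A - card (A \<inter> B)" "card (B - A) = card B - card (A \<inter> B)"
    using assms by (simp_all add: card_Diff_subset_Int Int_commute)
  moreover have "card (A \<inter> B) \<le> card B" using assms by (simp add: card_mono)
  ultimately show ?thesis using assms(3) by linarith
qed

lemma card_le_of_cover_by_almost_subsets:
  assumes "finite A" "finite S" "\<forall>X\<in>S. finite X \<and> card (X - A) \<le> 1" "U \<subseteq> A \<union> \<Union>S"
  shows "card U \<le> card A + card S"
proof -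
  have "U \<subseteq> A \<union> (\<Union>X\<in>S. X - A)" using assms(4) by blast
  then have "card U \<le> card (A \<union> (\<Union>X\<in>S. X - A))"
    using assms by (intro card_mono) auto
  also have "\<dots> \<le> card A + card (\<Union>X\<in>S. X - A)" by (rule card_Un_le)
  also have "card (\<Union>X\<in>S. X - A) \<le> (\<Sum>X\<in>S. card (X - A))" using assms(2) by (rule card_UN_le)
  also have "\<dots> \<le> (\<Sum>X\<in>S. 1)" using assms(3) by (intro sum_mono) auto
  finally show ?thesis by simp
qed

lemma card_sym_diff_Int_eq:
  assumes "finite X" "finite Y" "X - A = {e}" "Y - A = {f}" "e \<noteq> f"
  shows "card (sym_diff X Y) = card (sym_diff (X \<inter> A) (Y \<inter> A)) + 2"
proof -
  have X: "X = insert e (X \<inter> A)" "e \<notin> A" and Y: "Y = insert f (Y \<inter> A)" "f \<notin> A"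
    using assms(3,4) by blast+
  have "sym_diff X Y = insert e (insert f (sym_diff (X \<inter> A) (Y \<inter> A)))"
    using X Y assms(5) by auto
  moreover have "e \<notin> insert f (sym_diff (X \<inter> A) (Y \<inter> A))" "f \<notin> sym_diff (X \<inter> A) (Y \<inter> A)"
    using X Y assms(5) by auto
  ultimately show ?thesis using assms(1,2) by simp
qed

lemma least_greatest_of_family_sym_diff_le_1:
  assumes "finite \<C>" "\<C> \<noteq> {}" "\<forall>C\<in>\<C>. finite C"
    and "\<forall>C\<in>\<C>. \<forall>C'\<in>\<C>. card (sym_diff C C') \<le> 1"
  shows "\<exists>N\<in>\<C>. \<exists>M\<in>\<C>. \<forall>C\<in>\<C>. N \<subseteq> C \<and> C \<subseteq> M"
proof -
  have sub: "C' \<subseteq> C" if C: "C \<in> \<C>" "C' \<in> \<C>" "card C' \<le> card C" for C C'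
  proof -
    have "2 * card (C' - C) \<le> card (sym_diff C C')"
      by (rule card_Diff_le_half_sym_diff) (use assms(3) C in auto)
    moreover have "card (sym_diff C C') \<le> 1" using assms(4) C by blast
    ultimately have "card (C' - C) = 0" by linarith
    then show ?thesis using assms(3) C(2) by auto
  qed
  obtain C0 where "C0 \<in> \<C>" using assms(2) by blast
  then obtain N where N: "N \<in> \<C>" "\<forall>C\<in>\<C>. card N \<le> card C"
    using ex_has_least_nat[of "\<lambda>C. C \<in> \<C>" C0 card] by blast
  have "Max (card ` \<C>) \<in> card ` \<C>" using assms(1,2) by simp
  then obtain M where M: "M \<in> \<C>" "card M = Max (card ` \<C>)" by (metis imageE)
  have "card C \<le> card M" if "C \<in> \<C>" for C using M(2) assms(1) that by simp
  then have "N \<subseteq> C \<and> C \<subseteq> M" if "C \<in> \<C>" for C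
    using sub[OF that N(1)] sub[OF M(1) that] N(2) that by simp
  then show ?thesis using N(1) M(1) by blast
qed

text \<open>Models a simplex of \<open>\<Delta>\<^sub>n\<close> with at most \<open>n - 1\<close> vertices that covers all places, each vertex
  recorded as the set of coordinates in which it differs from a fixed vertex of the simplex.\<close>

locale covering_family =
  fixes n :: nat and \<F> :: "nat set set"
  assumes finite_family: "finite \<F>"
    and member_subset: "X \<in> \<F> \<Longrightarrow> X \<subseteq> {..<n}"
    and empty_member: "{} \<in> \<F>"
    and close: "X \<in> \<F> \<Longrightarrow> Y \<in> \<F> \<Longrightarrow> card (sym_diff X Y) \<le> 3"
    and covering: "{..<n} \<subseteq> \<Union>\<F>"
    and small: "card \<F> \<le> n - 1"
    and four_le: "4 \<le> n"
begin

lemma finite_member: "X \<in> \<F> \<Longrightarrow> finite X"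
  using member_subset finite_lessThan finite_subset by blast

lemma card_member_le_3: "X \<in> \<F> \<Longrightarrow> card X \<le> 3"
  using close[OF _ empty_member] by simp

end

locale covering_family_max = covering_family +
  fixes A :: "nat set"
  assumes max_member: "A \<in> \<F>" and card_le_max: "X \<in> \<F> \<Longrightarrow> card X \<le> card A"
begin

definition rest :: "nat set set" where
  "rest = \<F> - {{}, A}"

lemma finite_rest: "finite rest"
  unfolding rest_def using finite_family by simp

lemma card_Diff_max_le_1: "X \<in> \<F> \<Longrightarrow> card (X - A) \<le> 1"
  using card_Diff_le_half_sym_diff[of A X] close[OF max_member, of X]
    finite_member[OF max_member] finite_member card_le_max by fastforce

lemma max_nonempty: "A \<noteq> {}"
proof
  assume "A = {}"
  then have "X = {}" if "X \<in> \<F>" for X using card_le_max[OF that] finite_member[OF that] by simp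
  moreover have "0 \<in> \<Union>\<F>" by (rule subsetD[OF covering]) (use four_le in simp)
  ultimately show False by blast
qed

lemma card_le_cover_by_rest:
  assumes "S \<subseteq> rest" "{..<n} \<subseteq> A \<union> \<Union>S"
  shows "n \<le> card A + card S"
proof -
  have "finite S" using assms(1) finite_rest finite_subset by blast
  moreover have "\<forall>X\<in>S. finite X \<and> card (X - A) \<le> 1"
    using assms(1) finite_member card_Diff_max_le_1 unfolding rest_def by blast
  ultimately have "card {..<n} \<le> card A + card S"
    using card_le_of_cover_by_almost_subsets finite_member[OF max_member] assms(2) by blast
  then show ?thesis by simp
qed

lemma card_max: "card A = 3" and card_rest: "card rest = n - 3"
proof -
  have cover: "{..<n} \<subseteq> A \<union> \<Union>rest" using covering unfolding rest_def by blast
  have "card rest = card \<F> - 2"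
    unfolding rest_def using finite_family max_member empty_member max_nonempty
    by (simp add: card_Diff_subset)
  moreover have "n \<le> card A + card rest" using cover by (rule card_le_cover_by_rest[OF order_refl])
  ultimately show "card A = 3" "card rest = n - 3"
    using card_member_le_3[OF max_member] small four_le by auto
qed

text \<open>Without a private coordinate, \<open>X\<close> could be dropped from the cover in
  \<open>card_le_cover_by_rest\<close>, contradicting \<open>card_rest\<close>.\<close>

lemma private_element:
  assumes X: "X \<in> rest"
  shows "\<exists>e. X - A = {e} \<and> (\<forall>Y\<in>\<F> - {X}. e \<notin> Y)"
proof -
  have "\<exists>e\<in>X - A. \<forall>Y\<in>\<F> - {X}. e \<notin> Y"
  proof (rule ccontr)
    assume "\<not> ?thesis"
    then have shared: "\<forall>e\<in>X - A. \<exists>Y\<in>rest - {X}. e \<in> Y" unfolding rest_def by blast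
    have "{..<n} \<subseteq> A \<union> \<Union>(rest - {X})"
    proof
      fix i assume "i \<in> {..<n}"
      then obtain Y where Y: "Y \<in> \<F>" "i \<in> Y" using covering by blast
      show "i \<in> A \<union> \<Union>(rest - {X})"
        using Y shared unfolding rest_def by (cases "Y = X") auto
    qed
    then have "n \<le> card A + card (rest - {X})" by (intro card_le_cover_by_rest) auto
    moreover have "card (rest - {X}) = card rest - 1" using X by simp
    moreover have "card rest > 0" using X finite_rest by (auto simp: card_gt_0_iff)
    ultimately show False using card_max card_rest by linarith
  qed
  then obtain e where e: "e \<in> X - A" "\<forall>Y\<in>\<F> - {X}. e \<notin> Y" by blast
  have fXA: "finite (X - A)" and "card (X - A) \<le> Suc 0"
    using X finite_member card_Diff_max_le_1 unfolding rest_def by auto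
  then have "X - A = {e}" using e(1) card_le_Suc0_iff_eq[OF fXA] by blast
  then show ?thesis using e(2) by blast
qed

lemma trace_card:
  assumes X: "X \<in> rest"
  shows "1 \<le> card (X \<inter> A)" "card (X \<inter> A) \<le> 2"
proof -
  obtain e where e: "X - A = {e}" using private_element[OF X] by blast
  have XF: "X \<in> \<F>" using X unfolding rest_def by simp
  have "X = insert e (X \<inter> A)" "e \<notin> X \<inter> A" using e by blast+
  then have "card X = card (X \<inter> A) + 1"
    using finite_member[OF XF] by (metis Suc_eq_plus1 card_insert_disjoint finite_Int)
  then show "card (X \<inter> A) \<le> 2" using card_member_le_3[OF XF] by simp
  have "sym_diff A X = insert e (A - X)" "e \<notin> A - X" using e by blast+
  then have "card (sym_diff A X) = card (A - X) + 1"
    using finite_member[OF max_member] by simp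
  moreover have "card (A - X) = 3 - card (X \<inter> A)"
    using card_max finite_member[OF max_member] by (simp add: card_Diff_subset_Int Int_commute)
  moreover have "card (sym_diff A X) \<le> 3" using close XF max_member by blast
  ultimately show "1 \<le> card (X \<inter> A)" by linarith
qed

lemma traces_close:
  assumes X: "X \<in> rest" and Y: "Y \<in> rest"
  shows "card (sym_diff (X \<inter> A) (Y \<inter> A)) \<le> 1"
proof (cases "X = Y")
  case False
  obtain e f where e: "X - A = {e}" "\<forall>Z\<in>\<F> - {X}. e \<notin> Z" and f: "Y - A = {f}"
    using private_element X Y by meson
  have "Y \<in> \<F> - {X}" using Y False unfolding rest_def by blast
  then have "e \<noteq> f" using e(2) f by blast
  then have "card (sym_diff X Y) = card (sym_diff (X \<inter> A) (Y \<inter> A)) + 2"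
    using e(1) f X Y finite_member unfolding rest_def by (intro card_sym_diff_Int_eq) auto
  moreover have "card (sym_diff X Y) \<le> 3" using close X Y unfolding rest_def by blast
  ultimately show ?thesis by linarith
qed simp

lemma common_and_missing_element:
  "\<exists>a\<in>A. \<exists>c\<in>A. a \<noteq> c \<and> (\<forall>X\<in>rest. a \<in> X \<and> c \<notin> X)"
proof -
  define T where "T = (\<lambda>X. X \<inter> A) ` rest"
  have "\<exists>N\<in>T. \<exists>M\<in>T. \<forall>C\<in>T. N \<subseteq> C \<and> C \<subseteq> M"
  proof (rule least_greatest_of_family_sym_diff_le_1)
    show "finite T" using finite_rest unfolding T_def by simp
    show "T \<noteq> {}" using card_rest four_le unfolding T_def by auto
    show "\<forall>C\<in>T. finite C" using finite_member[OF max_member] unfolding T_def by simp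
    show "\<forall>C\<in>T. \<forall>C'\<in>T. card (sym_diff C C') \<le> 1" using traces_close unfolding T_def by simp
  qed
  then obtain XN XM where XN: "XN \<in> rest" and XM: "XM \<in> rest"
    and nested: "\<forall>X\<in>rest. XN \<inter> A \<subseteq> X \<inter> A \<and> X \<inter> A \<subseteq> XM \<inter> A"
    unfolding T_def by auto
  have "XN \<inter> A \<noteq> {}" using trace_card(1)[OF XN] by (metis One_nat_def card.empty not_one_le_zero)
  then obtain a where a: "a \<in> XN \<inter> A" by blast
  have "\<not> A \<subseteq> XM \<inter> A"
  proof
    assume "A \<subseteq> XM \<inter> A"
    then have "card A \<le> card (XM \<inter> A)" using finite_member[OF max_member] by (intro card_mono) auto
    then show False using card_max trace_card(2)[OF XM] by linarith
  qed
  then obtain c where c: "c \<in> A" "c \<notin> XM \<inter> A" by blast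
  have "a \<in> X \<and> c \<notin> X" if "X \<in> rest" for X using nested a c that by blast
  moreover have "a \<noteq> c" using a c nested XN by blast
  ultimately show ?thesis using a c(1) by blast
qed

end

context covering_family
begin

text \<open>Read in cube coordinates relative to a vertex \<open>x\<close>: flipping coordinate \<open>a\<close> of \<open>x\<close> gives the
  new vertex, and \<open>k\<close> is a coordinate on which the facet opposite \<open>Y\<close> agrees with it.\<close>

lemma cone_coordinate:
  "\<exists>a<n. {a} \<notin> \<F> \<and> (\<forall>X\<in>\<F> - {{}}. a \<in> X) \<and> (\<forall>Y\<in>\<F>. \<exists>k<n. \<forall>X\<in>\<F> - {Y}. k \<in> X \<longleftrightarrow> k = a)"
proof -
  have "Max (card ` \<F>) \<in> card ` \<F>" using finite_family empty_member by (intro Max_in) auto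
  then obtain A where A: "A \<in> \<F>" "card A = Max (card ` \<F>)" by (metis imageE)
  then interpret covering_family_max n \<F> A
    using finite_family by unfold_locales simp_all
  obtain a c where a: "a \<in> A" and c: "c \<in> A" "a \<noteq> c" and ac: "\<forall>X\<in>rest. a \<in> X \<and> c \<notin> X"
    using common_and_missing_element by blast
  have below_n: "x < n" if "x \<in> X" "X \<in> \<F>" for x X using member_subset that by blast
  have a_all: "\<forall>X\<in>\<F> - {{}}. a \<in> X" using a ac unfolding rest_def by blast
  have "{a} \<notin> \<F>"
  proof
    assume F: "{a} \<in> \<F>"
    have "card {a} \<noteq> card A" using card_max by simp
    then have "{a} \<in> rest" using F unfolding rest_def by blast
    then obtain e where "{a} - A = {e}" using private_element by blast
    then show False using a by auto
  qed
  moreover have coordinate: "\<exists>k<n. \<forall>X\<in>\<F> - {Y}. k \<in> X \<longleftrightarrow> k = a" if Y: "Y \<in> \<F>" for Y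
  proof -
    consider "Y = {}" | "Y = A" | "Y \<in> rest" using Y unfolding rest_def by blast
    then show ?thesis
    proof cases
      case 1
      then have "\<forall>X\<in>\<F> - {Y}. a \<in> X \<longleftrightarrow> a = a" using a_all by simp
      then show ?thesis using below_n[OF a A(1)] by blast
    next
      case 2
      then have "\<forall>X\<in>\<F> - {Y}. c \<in> X \<longleftrightarrow> c = a" using ac c(2) unfolding rest_def by auto
      then show ?thesis using below_n[OF c(1) A(1)] by blast
    next
      case 3
      then obtain e where e: "Y - A = {e}" "\<forall>X\<in>\<F> - {Y}. e \<notin> X" using private_element by blast
      have "e \<noteq> a" using e(1) a by blast
      then have "\<forall>X\<in>\<F> - {Y}. e \<in> X \<longleftrightarrow> e = a" using e(2) by simp
      moreover have "e < n" using e(1) below_n Y by blast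
      ultimately show ?thesis by blast
    qed
  qed
  then have "\<forall>Y\<in>\<F>. \<exists>k<n. \<forall>X\<in>\<F> - {Y}. k \<in> X \<longleftrightarrow> k = a" by blast
  ultimately show ?thesis using below_n[OF a A(1)] a_all by blast
qed

end

section \<open>Cube coordinates\<close>

definition covers_all_places :: "nat \<Rightarrow> bool list set \<Rightarrow> bool" where
  "covers_all_places n \<sigma> \<longleftrightarrow> (\<forall>i<n. \<forall>e. \<exists>v\<in>\<sigma>. v ! i \<noteq> e)"

lemma not_covers_all_places_imp_partial_Delta:
  "\<sigma> \<in> Delta n \<Longrightarrow> \<not> covers_all_places n \<sigma> \<Longrightarrow> \<sigma> \<in> partial_Delta n"
  unfolding partial_Delta_def covers_all_places_def by auto

definition diff_coords :: "bool list \<Rightarrow> bool list \<Rightarrow> nat set" where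
  "diff_coords x v = {i. i < length x \<and> v ! i \<noteq> x ! i}"

lemma hamming_eq_card_sym_diff_coords:
  assumes "length u = length x" "length v = length x"
  shows "hamming u v = card (sym_diff (diff_coords x u) (diff_coords x v))"
proof -
  have "{i. i < length u \<and> u ! i \<noteq> v ! i} = sym_diff (diff_coords x u) (diff_coords x v)"
    unfolding diff_coords_def using assms by auto
  then show ?thesis unfolding hamming_def by simp
qed

lemma nth_eq_iff_diff_coords:
  assumes "i < length x"
  shows "v ! i = w ! i \<longleftrightarrow> (i \<in> diff_coords x v \<longleftrightarrow> i \<in> diff_coords x w)"
  unfolding diff_coords_def using assms by auto

lemma inj_on_diff_coords: "inj_on (diff_coords x) {v. length v = length x}"
proof (rule inj_onI)
  fix u v assume "u \<in> {v. length v = length x}" "v \<in> {v. length v = length x}"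
    and "diff_coords x u = diff_coords x v"
  then show "u = v" using nth_eq_iff_diff_coords[of _ x u v] by (auto intro: nth_equalityI)
qed

lemma diff_coords_self: "diff_coords x x = {}"
  unfolding diff_coords_def by simp

lemma diff_coords_flip: "a < length x \<Longrightarrow> diff_coords x (x[a := \<not> x ! a]) = {a}"
  unfolding diff_coords_def by (auto simp: nth_list_update)

lemma covering_family_diff_coords:
  assumes n: "4 \<le> n" and \<sigma>: "\<sigma> \<in> Delta n" and x: "x \<in> \<sigma>"
    and cov: "covers_all_places n \<sigma>" and small: "card \<sigma> \<le> n - 1"
  shows "covering_family n (diff_coords x ` \<sigma>)"
proof
  note len = Delta_vertex_length[OF \<sigma>]
  show "finite (diff_coords x ` \<sigma>)" using Delta_finite[OF \<sigma>] by simp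
  show "X \<subseteq> {..<n}" if "X \<in> diff_coords x ` \<sigma>" for X
    using that len[OF x] unfolding diff_coords_def by auto
  show "{} \<in> diff_coords x ` \<sigma>" using x diff_coords_self by (metis image_eqI)
  show "card (sym_diff X Y) \<le> 3" if X: "X \<in> diff_coords x ` \<sigma>" and Y: "Y \<in> diff_coords x ` \<sigma>" for X Y
  proof -
    obtain u v where uv: "u \<in> \<sigma>" "v \<in> \<sigma>" "X = diff_coords x u" "Y = diff_coords x v"
      using X Y by blast
    have "hamming u v \<le> 3" using \<sigma> uv(1,2) unfolding Delta_def by blast
    moreover have "hamming u v = card (sym_diff X Y)"
      using hamming_eq_card_sym_diff_coords len uv len[OF x] by simp
    ultimately show ?thesis by simp
  qed
  show "{..<n} \<subseteq> \<Union>(diff_coords x ` \<sigma>)"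
  proof
    fix i assume "i \<in> {..<n}"
    then obtain v where "v \<in> \<sigma>" "v ! i \<noteq> x ! i" using cov unfolding covers_all_places_def by blast
    then show "i \<in> \<Union>(diff_coords x ` \<sigma>)"
      using \<open>i \<in> {..<n}\<close> len[OF x] unfolding diff_coords_def by blast
  qed
  have "inj_on (diff_coords x) \<sigma>"
    using inj_on_diff_coords by (rule inj_on_subset) (use len len[OF x] in auto)
  then show "card (diff_coords x ` \<sigma>) \<le> n - 1" using small by (simp add: card_image)
qed (rule n)

lemma insert_in_Delta_of_diff_coords:
  assumes \<sigma>: "\<sigma> \<in> Delta n" and x: "x \<in> \<sigma>"
    and w: "length w = n" "diff_coords x w = {a}"
    and a: "\<forall>v\<in>\<sigma>. diff_coords x v \<noteq> {} \<longrightarrow> a \<in> diff_coords x v"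
  shows "insert w \<sigma> \<in> Delta n"
proof -
  note len = Delta_vertex_length[OF \<sigma>]
  have "hamming w v \<le> 3 \<and> hamming v w \<le> 3" if v: "v \<in> \<sigma>" for v
  proof -
    have "card (sym_diff {a} (diff_coords x v)) \<le> 3"
    proof (cases "diff_coords x v = {}")
      case False
      then have "sym_diff {a} (diff_coords x v) = diff_coords x v - {a}" using a v by blast
      moreover have "card (diff_coords x v) = hamming v x"
        using hamming_eq_card_sym_diff_coords[of v x x] len v x diff_coords_self by simp
      moreover have "hamming v x \<le> 3" using \<sigma> v x unfolding Delta_def by blast
      ultimately show ?thesis by (metis card_Diff1_le dual_order.trans finite_Diff2 card.infinite)
    qed simp
    then show ?thesis
      using hamming_eq_card_sym_diff_coords[of w x v] hamming_eq_card_sym_diff_coords[of v x w]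
        w len[OF v] len[OF x] by (simp add: Un_commute)
  qed
  moreover have "hamming w w = 0" unfolding hamming_def by simp
  ultimately show ?thesis using \<sigma> w(1) unfolding Delta_def cube_vertices_def by auto
qed

lemma cone_vertex_exists:
  assumes n: "4 \<le> n" and \<sigma>: "\<sigma> \<in> Delta n" and cov: "covers_all_places n \<sigma>"
    and small: "card \<sigma> \<le> n - 1"
  shows "\<exists>w. w \<notin> \<sigma> \<and> insert w \<sigma> \<in> Delta n \<and> (\<forall>y\<in>\<sigma>. \<not> covers_all_places n (insert w \<sigma> - {y}))"
proof -
  note len = Delta_vertex_length[OF \<sigma>]
  obtain x where x: "x \<in> \<sigma>" using \<sigma> unfolding Delta_def by blast
  let ?D = "diff_coords x"
  interpret covering_family n "?D ` \<sigma>"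
    using covering_family_diff_coords[OF n \<sigma> x cov small] .
  obtain a where a: "a < n" "{a} \<notin> ?D ` \<sigma>" "\<forall>X\<in>?D ` \<sigma> - {{}}. a \<in> X"
    and coord: "\<forall>Y\<in>?D ` \<sigma>. \<exists>k<n. \<forall>X\<in>?D ` \<sigma> - {Y}. k \<in> X \<longleftrightarrow> k = a"
    using cone_coordinate by (elim exE conjE) (rule that)
  define w where "w = x[a := \<not> x ! a]"
  have w: "length w = n" "?D w = {a}"
    unfolding w_def using diff_coords_flip len[OF x] a(1) by auto
  have "w \<notin> \<sigma>" using a(2) w(2) by (metis image_eqI)
  moreover have "insert w \<sigma> \<in> Delta n"
    using insert_in_Delta_of_diff_coords[OF \<sigma> x w] a(3) by blast
  moreover have "\<not> covers_all_places n (insert w \<sigma> - {y})" if y: "y \<in> \<sigma>" for y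
  proof
    obtain k where k: "k < n" "\<forall>X\<in>?D ` \<sigma> - {?D y}. k \<in> X \<longleftrightarrow> k = a"
      using coord y by blast
    have "v ! k = w ! k" if v: "v \<in> insert w \<sigma> - {y}" for v
    proof (cases "v = w")
      case False
      then have "v \<in> \<sigma>" "v \<noteq> y" using v by auto
      have "?D v \<noteq> ?D y"
      proof
        assume "?D v = ?D y"
        then have "v = y"
          using inj_onD[OF inj_on_diff_coords] len[OF \<open>v \<in> \<sigma>\<close>] len[OF y] len[OF x] by simp
        then show False using \<open>v \<noteq> y\<close> by contradiction
      qed
      then have "k \<in> ?D v \<longleftrightarrow> k \<in> ?D w" using k(2) w(2) \<open>v \<in> \<sigma>\<close> by auto
      moreover have "k < length x" using len[OF x] k(1) by simp
      ultimately show ?thesis using nth_eq_iff_diff_coords by blast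
    qed simp
    moreover assume "covers_all_places n (insert w \<sigma> - {y})"
    ultimately show False using k(1) unfolding covers_all_places_def by blast
  qed
  ultimately show ?thesis by blast
qed

theorem mainTheorem16:
  fixes n p :: nat and c :: "bool list set \<Rightarrow> int"
  assumes "n \<ge> 5" and "p \<le> n - 2"
    and "is_cycle (Delta n) p c"
  shows "\<exists>c'. is_cycle (Delta n) p c' \<and>
              (\<forall>\<sigma>. c' \<sigma> \<noteq> 0 \<longrightarrow> \<sigma> \<in> partial_Delta n) \<and>
              homologous (Delta n) p c c'"
proof -
  have "\<exists>c'. is_cycle (Delta n) p c' \<and> (\<forall>\<sigma>. c' \<sigma> \<noteq> 0 \<longrightarrow> \<not> covers_all_places n \<sigma>)
      \<and> homologous (Delta n) p c c'"
  proof (rule cycle_homologous_to_cycle_avoiding[OF assms(3)])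
    fix \<sigma> assume "c \<sigma> \<noteq> 0" and cov: "covers_all_places n \<sigma>"
    then have "\<sigma> \<in> Delta n" "card \<sigma> \<le> n - 1"
      using assms unfolding is_cycle_def is_chain_def by auto
    then show "\<exists>w. w \<notin> \<sigma> \<and> insert w \<sigma> \<in> Delta n \<and> (\<forall>y\<in>\<sigma>. \<not> covers_all_places n (insert w \<sigma> - {y}))"
      using cone_vertex_exists assms(1) cov by simp
  qed
  then obtain c' where c': "is_cycle (Delta n) p c'" "homologous (Delta n) p c c'"
    and off: "\<forall>\<sigma>. c' \<sigma> \<noteq> 0 \<longrightarrow> \<not> covers_all_places n \<sigma>"
    by blast
  have "c' \<sigma> \<noteq> 0 \<longrightarrow> \<sigma> \<in> partial_Delta n" for \<sigma>
    using c'(1) off not_covers_all_places_imp_partial_Delta unfolding is_cycle_def is_chain_def by blast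
  then show ?thesis using c' by blast
qed

end
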